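(* Let $K$ be a Cantor set, let $T:K\to K$ be a homeomorphism, and let $K_1,\dots,K_N$ be pairwise disjoint Cantor sets with $K=\bigcup_{i=1}^N K_i$. Suppose that for every $1\le i\le N$ at least one of the following holds: (i) for every $y\in K_i$, $T^{-1}(y)\in K_i$; (ii) for every $x\in K_i$, $T(x)\in K_i$. Then there exists a homeomorphism $\widetilde T:K\to K$ such that for every $x\in K$ and every $i$, $\widetilde T(x)\in K_i$ if and only if $T(x)\in K_i$, and every orbit of $\widetilde T$ converges to a fixed point of $\widetilde T$.
   Context: A Cantor set is a nonempty totally disconnected, perfect, compact metric space. *)

theory Defs
  imports "HOL-Analysis.Analysis"
begin

definition cantor_set :: "'a::metric_space set \<Rightarrow> bool" where
  "cantor_set K \<longleftrightarrow> K \<noteq> {} \<and> compact K \<and> (\<forall>x\<in>K. x islimpt K) \<and>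
     (\<forall>C. C \<subseteq> K \<and> connected C \<longrightarrow> (\<exists>x. C \<subseteq> {x}))"

end

theory Submission
  imports Defs
begin

text \<open>Let \<open>B\<^sub>j = T\<^sup>-\<^sup>1(K\<^sub>j)\<close>. The hypothesis says \<open>B\<^sub>j \<subseteq> K\<^sub>j\<close> or \<open>K\<^sub>j \<subseteq> B\<^sub>j\<close>, and all these pieces,
  as well as their differences, are clopen in \<open>K\<close> and hence Cantor sets. Every Cantor set is
  homeomorphic to \<open>{0,1}\<^sup>\<nat>\<close>, so we can choose homeomorphisms \<open>h\<^sub>j : B\<^sub>j \<rightarrow> K\<^sub>j\<close>: the identity if
  \<open>B\<^sub>j = K\<^sub>j\<close>; if \<open>K\<^sub>j \<subset> B\<^sub>j\<close>, a map which in coordinates prepends the digit 1, so that all its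
  orbits converge to a fixed point; if \<open>B\<^sub>j \<subset> K\<^sub>j\<close>, the inverse of such a map, under which only
  its fixed point stays in \<open>B\<^sub>j\<close> forever. The \<open>h\<^sub>j\<close> glue to a homeomorphism \<open>T'\<close> with
  \<open>T'(B\<^sub>j) = K\<^sub>j\<close>, so \<open>T'\<close> and \<open>T\<close> send each point into the same piece. An orbit of \<open>T'\<close> either
  enters some \<open>K\<^sub>j \<subseteq> B\<^sub>j\<close>, after which it converges to a fixed point, or stays in one \<open>B\<^sub>j \<subset> K\<^sub>j\<close>
  forever and then is that fixed point.\<close>

section \<open>Clopen subsets of Cantor sets\<close>

text \<open>For closed \<open>X\<close>, this says that \<open>V\<close> is clopen in the subspace topology of \<open>X\<close>.\<close>
definition clopen_in :: "'a::topological_space set \<Rightarrow> 'a set \<Rightarrow> bool" where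
  "clopen_in X V \<longleftrightarrow> V \<subseteq> X \<and> closed V \<and> closed (X - V)"

lemma clopen_in_self: "closed X \<Longrightarrow> clopen_in X X"
  by (simp add: clopen_in_def)

lemma clopen_in_Int: "clopen_in X A \<Longrightarrow> clopen_in X B \<Longrightarrow> clopen_in X (A \<inter> B)"
  unfolding clopen_in_def by (auto simp: Diff_Int closed_Un)

lemma clopen_in_Un: "clopen_in X A \<Longrightarrow> clopen_in X B \<Longrightarrow> clopen_in X (A \<union> B)"
  unfolding clopen_in_def by (auto simp: Diff_Un closed_Int)

lemma clopen_in_Diff:
  assumes "clopen_in X A" "clopen_in X B"
  shows "clopen_in X (A - B)"
proof -
  have "A - B = A \<inter> (X - B)" "X - (A - B) = (X - A) \<union> B"
    using assms by (auto simp: clopen_in_def)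
  then show ?thesis
    using assms unfolding clopen_in_def by (metis closed_Int closed_Un Diff_subset inf.coboundedI1)
qed

lemma clopen_in_Union:
  assumes "closed X" "finite F" "\<And>A. A \<in> F \<Longrightarrow> clopen_in X A"
  shows "clopen_in X (\<Union>F)"
  using assms(2,3) by (induction F rule: finite_induct) (simp add: clopen_in_def assms(1), simp add: clopen_in_Un)

lemma clopen_in_eq_Int_open:
  assumes "clopen_in X V"
  obtains U where "open U" "V = X \<inter> U"
proof (rule that)
  show "open (- (X - V))"
    using assms by (intro open_Compl) (simp add: clopen_in_def)
  show "V = X \<inter> - (X - V)"
    using assms by (auto simp: clopen_in_def)
qed

lemma clopen_in_partition:
  assumes "finite I" "X = (\<Union>i\<in>I. P i)" "\<And>i. i \<in> I \<Longrightarrow> closed (P i)"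
    and "\<And>i j. i \<in> I \<Longrightarrow> j \<in> I \<Longrightarrow> i \<noteq> j \<Longrightarrow> P i \<inter> P j = {}" "j \<in> I"
  shows "clopen_in X (P j)"
proof -
  have "X - P j = (\<Union>i\<in>I - {j}. P i)"
    using assms(2,4,5) by blast
  moreover have "closed (\<Union>i\<in>I - {j}. P i)"
    using assms(1,3) by (intro closed_UN) auto
  ultimately show ?thesis
    using assms(2,3,5) by (auto simp: clopen_in_def)
qed

lemma cantor_set_closed: "cantor_set X \<Longrightarrow> closed X"
  by (simp add: cantor_set_def compact_imp_closed)

lemma cantor_set_component_singleton:
  assumes "cantor_set X" "x \<in> X"
  shows "{x} \<in> connected_components_of (top_of_set X)"
proof -
  have "y = x" if xy: "connected_component_of (top_of_set X) x y" for y
  proof -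
    obtain C where "connectedin (top_of_set X) C" "x \<in> C" "y \<in> C"
      using xy by (auto simp: connected_component_of_def)
    then have "C \<subseteq> X" "connected C"
      by (auto simp: connectedin_subtopology)
    then obtain z where "C \<subseteq> {z}"
      using assms(1) unfolding cantor_set_def by blast
    with \<open>x \<in> C\<close> \<open>y \<in> C\<close> show ?thesis by auto
  qed
  then have "connected_component_of_set (top_of_set X) x = {x}"
    using assms(2) by (auto simp: connected_component_of_refl)
  then show ?thesis
    using assms(2) unfolding connected_components_of_def
    by (metis image_eqI topspace_euclidean_subtopology)
qed

text \<open>Cantor sets are zero-dimensional, by Wilder's theorem on components of locally compact
  Hausdorff spaces.\<close>
lemma cantor_set_clopen_nbhd:
  fixes X :: "'a::metric_space set"
  assumes "cantor_set X" "x \<in> X" "e > 0"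
  obtains U where "x \<in> U" "U \<subseteq> ball x e" "clopen_in X U"
proof -
  let ?X = "top_of_set X"
  have "compact X" using assms(1) by (simp add: cantor_set_def)
  then have "locally_compact_space ?X"
    by (simp add: compact_imp_locally_compact_space compact_space_subtopology)
  moreover have "compactin ?X {x}"
    using assms(2) by simp
  moreover have "openin ?X (X \<inter> ball x e)"
    by (simp add: openin_open_Int)
  ultimately obtain U V where UV: "openin ?X U" "openin ?X V" "disjnt U V"
      "U \<union> V = topspace ?X" "{x} \<subseteq> U" "U \<subseteq> X \<inter> ball x e"
    by (rule wilder_locally_compact_component_thm[OF _ Hausdorff_space_subtopology[OF Hausdorff_space_euclidean]
        cantor_set_component_singleton[OF assms(1,2)]])
      (use assms in auto)
  then have "U = X - V" "X - U = V"
    by (auto simp: disjnt_def)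
  then have "closedin ?X U" "closedin ?X (X - U)"
    using UV(1,2) unfolding closedin_def by (auto dest: openin_subset simp: double_diff)
  then show ?thesis
    using that UV cantor_set_closed[OF assms(1)] closedin_closed_trans
    by (auto simp: clopen_in_def)
qed

lemma cantor_set_clopen_in:
  assumes "cantor_set X" "clopen_in X V" "V \<noteq> {}"
  shows "cantor_set V"
proof -
  obtain U where U: "open U" "V = X \<inter> U"
    using assms(2) by (rule clopen_in_eq_Int_open)
  have "V \<subseteq> X" "closed V"
    using assms(2) by (auto simp: clopen_in_def)
  then have "compact V"
    using compact_Int_closed[of X V] assms(1) by (simp add: cantor_set_def Int_absorb1)
  moreover have "x islimpt V" if "x \<in> V" for x
    unfolding U(2) using assms(1) that U
    by (intro islimpt_Int_eventually) (auto simp: cantor_set_def eventually_at_in_open')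
  moreover have "\<exists>x. C \<subseteq> {x}" if "C \<subseteq> V" "connected C" for C
    using assms(1) that \<open>V \<subseteq> X\<close> unfolding cantor_set_def by (meson order_trans)
  ultimately show ?thesis
    using assms(3) unfolding cantor_set_def by auto
qed

lemma cantor_set_split_clopen:
  assumes "cantor_set X" "clopen_in X C" "C \<noteq> {}"
  obtains V where "clopen_in X V" "V \<subseteq> C" "V \<noteq> {}" "C - V \<noteq> {}"
proof -
  obtain x where x: "x \<in> C"
    using assms(3) by blast
  have "x islimpt C"
    using cantor_set_clopen_in[OF assms] x by (simp add: cantor_set_def)
  then obtain y where y: "y \<in> C" "y \<noteq> x"
    unfolding islimpt_def by blast
  have "x \<in> X" "dist x y > 0"
    using x y assms(2) by (auto simp: clopen_in_def)
  then obtain U where U: "x \<in> U" "U \<subseteq> ball x (dist x y)" "clopen_in X U"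
    by (rule cantor_set_clopen_nbhd[OF assms(1)])
  show ?thesis
  proof (rule that)
    show "clopen_in X (U \<inter> C)"
      using U(3) assms(2) by (rule clopen_in_Int)
    show "U \<inter> C \<noteq> {}" "C - U \<inter> C \<noteq> {}"
      using U(1,2) x y by auto
  qed auto
qed

lemma cantor_set_finite_clopen_cover:
  fixes X :: "'a::metric_space set"
  assumes "cantor_set X" "e > 0"
  obtains F where "finite F" "X \<subseteq> \<Union>F"
    "\<And>U. U \<in> F \<Longrightarrow> clopen_in X U \<and> (\<forall>x\<in>U. \<forall>y\<in>U. dist x y < e)"
proof -
  have "\<exists>W. open W \<and> z \<in> W \<and> clopen_in X (X \<inter> W) \<and> X \<inter> W \<subseteq> ball z (e / 2)"
    if "z \<in> X" for z
  proof -
    have "e / 2 > 0"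
      using assms(2) by simp
    then obtain U where U: "z \<in> U" "U \<subseteq> ball z (e / 2)" "clopen_in X U"
      by (rule cantor_set_clopen_nbhd[OF assms(1) \<open>z \<in> X\<close>])
    then obtain W where "open W" "U = X \<inter> W"
      by (meson clopen_in_eq_Int_open)
    with U show ?thesis by blast
  qed
  then obtain W where W: "\<And>z. z \<in> X \<Longrightarrow> open (W z) \<and> z \<in> W z \<and> clopen_in X (X \<inter> W z) \<and>
      X \<inter> W z \<subseteq> ball z (e / 2)"
    by metis
  have "compact X"
    using assms(1) by (simp add: cantor_set_def)
  moreover have "\<And>z. z \<in> X \<Longrightarrow> open (W z)" "X \<subseteq> (\<Union>z\<in>X. W z)"
    using W by blast+
  ultimately obtain Z where Z: "Z \<subseteq> X" "finite Z" "X \<subseteq> (\<Union>z\<in>Z. W z)"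
    by (rule compactE_image)
  show ?thesis
  proof (rule that)
    show "finite ((\<lambda>z. X \<inter> W z) ` Z)"
      using Z(2) by simp
    show "X \<subseteq> \<Union>((\<lambda>z. X \<inter> W z) ` Z)"
      using Z(3) by blast
    fix U assume "U \<in> (\<lambda>z. X \<inter> W z) ` Z"
    then obtain z where z: "z \<in> X" "U = X \<inter> W z"
      using Z(1) by blast
    have "dist x y < e" if "x \<in> ball z (e / 2)" "y \<in> ball z (e / 2)" for x y
      using that dist_triangle[of x y z] by (simp add: dist_commute)
    then show "clopen_in X U \<and> (\<forall>x\<in>U. \<forall>y\<in>U. dist x y < e)"
      using W[OF z(1)] z(2) by blast
  qed
qed

lemma cantor_set_separating_clopens:
  fixes X :: "'a::metric_space set"
  assumes "cantor_set X"
  obtains Q :: "nat \<Rightarrow> 'a set" where "\<And>k. clopen_in X (Q k)"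
    "\<And>x y. x \<in> X \<Longrightarrow> y \<in> X \<Longrightarrow> x \<noteq> y \<Longrightarrow> \<exists>k. x \<in> Q k \<and> y \<notin> Q k"
proof -
  obtain F where F: "\<And>k. finite (F k)" "\<And>k. X \<subseteq> \<Union>(F k)"
    "\<And>k U. U \<in> F k \<Longrightarrow> clopen_in X U \<and> (\<forall>x\<in>U. \<forall>y\<in>U. dist x y < inverse (Suc k))"
  proof -
    have "\<exists>F. finite F \<and> X \<subseteq> \<Union>F \<and>
        (\<forall>U\<in>F. clopen_in X U \<and> (\<forall>x\<in>U. \<forall>y\<in>U. dist x y < inverse (Suc k)))" for k
      by (rule cantor_set_finite_clopen_cover[OF assms, of "inverse (Suc k)"]) auto
    then show ?thesis
      using that by metis
  qed
  define S where "S = (\<Union>k. F k)"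
  have "countable S"
    unfolding S_def using F(1) by (simp add: countable_finite)
  have "X \<noteq> {}"
    using assms by (simp add: cantor_set_def)
  then have "S \<noteq> {}"
    using F(2)[of 0] by (auto simp: S_def)
  define Q where "Q = from_nat_into S"
  have range_Q: "range Q = S"
    unfolding Q_def using \<open>S \<noteq> {}\<close> \<open>countable S\<close> by (rule range_from_nat_into)
  show ?thesis
  proof (rule that)
    show "clopen_in X (Q k)" for k
    proof -
      have "Q k \<in> S"
        using range_Q by blast
      then show ?thesis
        using F(3) by (auto simp: S_def)
    qed
    fix x y assume xy: "x \<in> X" "y \<in> X" "x \<noteq> y"
    obtain k where k: "inverse (Suc k) < dist x y"
      using xy(3) reals_Archimedean by (metis of_nat_Suc zero_less_dist_iff)
    obtain U where U: "U \<in> F k" "x \<in> U"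
      using F(2) xy(1) by blast
    then have "y \<notin> U"
      using F(3)[OF U(1)] k by fastforce
    moreover have "U \<in> range Q"
      using U(1) range_Q by (auto simp: S_def)
    ultimately show "\<exists>k. x \<in> Q k \<and> y \<notin> Q k"
      using U(2) by blast
  qed
qed

section \<open>Every Cantor set is homeomorphic to \<open>{0,1}\<^sup>\<nat>\<close>\<close>

definition cantor_space :: "(nat \<Rightarrow> real) set" where
  "cantor_space = {a. \<forall>n. a n \<in> {0, 1}}"

definition rev_prefix :: "(nat \<Rightarrow> bool) \<Rightarrow> nat \<Rightarrow> bool list" where
  "rev_prefix a n = rev (map a [0..<n])"

lemma rev_prefix_0 [simp]: "rev_prefix a 0 = []"
  and rev_prefix_Suc [simp]: "rev_prefix a (Suc n) = a n # rev_prefix a n"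
  and length_rev_prefix [simp]: "length (rev_prefix a n) = n"
  by (simp_all add: rev_prefix_def)

text \<open>The cells of level \<open>n\<close> are indexed by bit lists of length \<open>n\<close>, newest bit first; the
  cell of \<open>b # s\<close> is \<open>split n (cell s)\<close> or its complement in \<open>cell s\<close>. Splitting along \<open>Q n\<close>
  whenever \<open>Q n\<close> cuts the cell makes the coding injective.\<close>
locale cantor_coding =
  fixes X :: "'a::metric_space set" and split :: "nat \<Rightarrow> 'a set \<Rightarrow> 'a set"
    and Q :: "nat \<Rightarrow> 'a set"
  assumes cantor: "cantor_set X"
    and split: "\<And>n C. clopen_in X C \<Longrightarrow> C \<noteq> {} \<Longrightarrow>
      clopen_in X (split n C) \<and> split n C \<subseteq> C \<and> split n C \<noteq> {} \<and> C - split n C \<noteq> {}"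
    and split_along_Q: "\<And>n C. clopen_in X C \<Longrightarrow> C \<inter> Q n \<noteq> {} \<Longrightarrow> C - Q n \<noteq> {} \<Longrightarrow>
      split n C = C \<inter> Q n"
    and Q_separating: "\<And>x y. x \<in> X \<Longrightarrow> y \<in> X \<Longrightarrow> x \<noteq> y \<Longrightarrow> \<exists>k. x \<in> Q k \<and> y \<notin> Q k"
begin

primrec cell :: "bool list \<Rightarrow> 'a set" where
  "cell [] = X"
| "cell (b # s) = (if b then split (length s) (cell s) else cell s - split (length s) (cell s))"

lemma cell_clopen_nonempty: "clopen_in X (cell s) \<and> cell s \<noteq> {}"
proof (induction s)
  case Nil
  show ?case
    using cantor by (simp add: cantor_set_def cantor_set_closed clopen_in_self)
next
  case (Cons b s)
  then show ?case
    using split[of "cell s" "length s"] clopen_in_Diff by auto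
qed

lemma cell_Cons_subset: "cell (b # s) \<subseteq> cell s"
  using split[of "cell s" "length s"] cell_clopen_nonempty[of s] by auto

lemma cell_subset: "cell s \<subseteq> X"
  using cell_clopen_nonempty[of s] by (simp add: clopen_in_def)

lemma cell_True_False:
  "cell s = cell (True # s) \<union> cell (False # s)" "cell (True # s) \<inter> cell (False # s) = {}"
  using split[of "cell s" "length s"] cell_clopen_nonempty[of s] by auto

lemma cell_unique: "x \<in> cell s \<Longrightarrow> x \<in> cell t \<Longrightarrow> length s = length t \<Longrightarrow> s = t"
proof (induction s arbitrary: t)
  case Nil
  then show ?case by simp
next
  case (Cons b s)
  then obtain c t' where t: "t = c # t'"
    by (cases t) auto
  have "x \<in> cell s"
    using Cons.prems(1) cell_Cons_subset[of b s] by blast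
  moreover have "x \<in> cell t'"
    using Cons.prems(2) t cell_Cons_subset[of c t'] by blast
  moreover have "length s = length t'"
    using Cons.prems(3) t by simp
  ultimately have "s = t'"
    by (rule Cons.IH)
  moreover have "b = c"
    using Cons.prems t \<open>s = t'\<close> cell_True_False(2)[of s] by (cases b; cases c) auto
  ultimately show ?case
    using t by simp
qed

definition digit :: "'a \<Rightarrow> nat \<Rightarrow> bool" where
  "digit x n \<longleftrightarrow> (\<exists>s. length s = n \<and> x \<in> cell (True # s))"

lemma mem_cell_rev_prefix: "x \<in> X \<Longrightarrow> x \<in> cell (rev_prefix (digit x) n)"
proof (induction n)
  case 0
  then show ?case by simp
next
  case (Suc n)
  let ?s = "rev_prefix (digit x) n"
  have x: "x \<in> cell ?s"
    using Suc by blast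
  have "digit x n \<longleftrightarrow> x \<in> cell (True # ?s)"
  proof
    assume "digit x n"
    then obtain s where s: "length s = n" "x \<in> cell (True # s)"
      unfolding digit_def by blast
    then have "x \<in> cell s"
      using cell_Cons_subset by blast
    then have "s = ?s"
      using cell_unique[OF _ x] s(1) by simp
    with s show "x \<in> cell (True # ?s)" by simp
  next
    assume "x \<in> cell (True # ?s)"
    then show "digit x n"
      unfolding digit_def using length_rev_prefix by blast
  qed
  moreover have "x \<in> cell (True # ?s) \<or> x \<in> cell (False # ?s)"
    using x cell_True_False(1)[of ?s] by blast
  ultimately show ?case
    using cell_True_False(2)[of ?s] by (cases "digit x n") (simp_all del: cell.simps)
qed

lemma mem_cell_iff:
  assumes "x \<in> X"
  shows "x \<in> cell s \<longleftrightarrow> s = rev_prefix (digit x) (length s)"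
  using cell_unique[of x s "rev_prefix (digit x) (length s)"] mem_cell_rev_prefix[OF assms, of "length s"]
  by auto

definition code :: "'a \<Rightarrow> nat \<Rightarrow> real" where
  "code x n = of_bool (digit x n)"

lemma code_in_cantor_space: "code x \<in> cantor_space"
  by (simp add: cantor_space_def code_def)

lemma clopen_digit: "clopen_in X {x \<in> X. digit x n}"
proof -
  have "{x \<in> X. digit x n} = \<Union>(cell ` Cons True ` {s. length s = n})"
    using cell_subset unfolding digit_def by (auto simp del: cell.simps)
  moreover have "finite (cell ` Cons True ` {s :: bool list. length s = n})"
    using finite_lists_length_eq[of "UNIV :: bool set" n] by simp
  moreover have "clopen_in X A" if "A \<in> cell ` Cons True ` {s. length s = n}" for A
    using that cell_clopen_nonempty by blast
  ultimately show ?thesis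
    using clopen_in_Union[OF cantor_set_closed[OF cantor]] by metis
qed

lemma continuous_on_code: "continuous_on X code"
proof (rule continuous_on_coordinatewise_then_product)
  fix n
  let ?A = "{x \<in> X. digit x n}"
  have "continuous_on (?A \<union> (X - ?A)) (\<lambda>x. if x \<in> ?A then 1 else (0::real))"
    using clopen_digit[of n] by (intro continuous_on_If) (auto simp: clopen_in_def)
  moreover have "?A \<union> (X - ?A) = X" by blast
  ultimately show "continuous_on X (\<lambda>x. code x n)"
    by (auto simp: code_def elim: continuous_on_eq)
qed

lemma inj_on_code: "inj_on code X"
proof (rule inj_onI, rule ccontr)
  fix x y assume xy: "x \<in> X" "y \<in> X" "code x = code y" "x \<noteq> y"
  obtain k where k: "x \<in> Q k" "y \<notin> Q k"
    using Q_separating xy by blast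
  let ?s = "rev_prefix (digit x) k"
  have "digit x = digit y"
    using xy(3) by (simp add: code_def fun_eq_iff of_bool_eq_iff)
  then have x: "x \<in> cell (digit x k # ?s)" and y: "y \<in> cell (digit x k # ?s)"
    using mem_cell_rev_prefix[OF xy(1), of "Suc k"] mem_cell_rev_prefix[OF xy(2), of "Suc k"]
    by simp_all
  have "x \<in> cell ?s" "y \<in> cell ?s"
    using x y cell_Cons_subset by blast+
  then have "split k (cell ?s) = cell ?s \<inter> Q k"
    using k cell_clopen_nonempty by (intro split_along_Q) blast+
  then show False
    using x y k by (cases "digit x k") auto
qed

lemma cantor_space_subset_code_image: "cantor_space \<subseteq> code ` X"
proof
  fix a assume a: "a \<in> cantor_space"
  define b where "b n \<longleftrightarrow> a n = 1" for n
  define C where "C n = cell (rev_prefix b n)" for n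
  have "decseq C"
    unfolding C_def by (intro decseq_SucI) (simp add: cell_Cons_subset del: cell.simps)
  have "X \<inter> (\<Inter>n. C n) \<noteq> {}"
  proof (rule compact_imp_fip_image)
    show "compact X"
      using cantor by (simp add: cantor_set_def)
    show "closed (C n)" for n
      using cell_clopen_nonempty by (simp add: C_def clopen_in_def)
    fix I :: "nat set" assume "finite I"
    then obtain m where m: "I \<subseteq> {..<m}"
      using finite_nat_bounded by blast
    have "C m \<subseteq> C n" if "n \<in> I" for n
    proof -
      have "n \<le> m"
        using m that by auto
      with \<open>decseq C\<close> show ?thesis
        unfolding decseq_def by blast
    qed
    moreover have "C m \<subseteq> X"
      by (simp add: C_def cell_subset)
    moreover have "C m \<noteq> {}"
      using cell_clopen_nonempty by (simp add: C_def)
    ultimately show "X \<inter> (\<Inter>n\<in>I. C n) \<noteq> {}"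
      by blast
  qed
  then obtain x where x: "x \<in> X" "\<And>n. x \<in> C n"
    by blast
  have "rev_prefix b (Suc n) = rev_prefix (digit x) (Suc n)" for n
    using mem_cell_iff[OF x(1), of "rev_prefix b (Suc n)"] x(2)[of "Suc n"]
    by (simp only: C_def length_rev_prefix)
  then have "b n = digit x n" for n
    by simp
  then have "code x = a"
    using a by (auto simp: code_def b_def cantor_space_def fun_eq_iff)
  with x(1) show "a \<in> code ` X"
    by blast
qed

lemma homeomorphism_code: "\<exists>psi. homeomorphism X cantor_space code psi"
proof (rule homeomorphism_compact)
  show "compact X"
    using cantor by (simp add: cantor_set_def)
  show "code ` X = cantor_space"
    using cantor_space_subset_code_image code_in_cantor_space by blast
qed (simp_all add: continuous_on_code inj_on_code)

end

lemma cantor_set_homeomorphic_cantor_space: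
  fixes X :: "'a::metric_space set"
  assumes "cantor_set X"
  obtains phi psi where "homeomorphism X cantor_space phi psi"
proof -
  obtain Q :: "nat \<Rightarrow> 'a set" where Q: "\<And>k. clopen_in X (Q k)"
    "\<And>x y. x \<in> X \<Longrightarrow> y \<in> X \<Longrightarrow> x \<noteq> y \<Longrightarrow> \<exists>k. x \<in> Q k \<and> y \<notin> Q k"
    using cantor_set_separating_clopens[OF assms] by blast
  define proper where "proper C V \<longleftrightarrow> clopen_in X V \<and> V \<subseteq> C \<and> V \<noteq> {} \<and> C - V \<noteq> {}" for C V
  define split where "split n C = (if C \<inter> Q n \<noteq> {} \<and> C - Q n \<noteq> {} then C \<inter> Q n
     else SOME V. proper C V)" for n C
  have "proper C (split n C)" if "clopen_in X C" "C \<noteq> {}" for n C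
  proof (cases "C \<inter> Q n \<noteq> {} \<and> C - Q n \<noteq> {}")
    case True
    then show ?thesis
      using clopen_in_Int[OF that(1) Q(1)] by (auto simp: split_def proper_def)
  next
    case False
    have "\<exists>V. proper C V"
      using cantor_set_split_clopen[OF assms that] unfolding proper_def by metis
    moreover have "split n C = (SOME V. proper C V)"
      by (simp only: split_def False if_False)
    ultimately show ?thesis
      by (metis someI_ex)
  qed
  then interpret cantor_coding X split Q
    using assms Q(2) by unfold_locales (auto simp: proper_def split_def)
  show ?thesis
    using homeomorphism_code that by blast
qed

section \<open>Homeomorphisms absorbing a Cantor set\<close>

lemma case_nat_in_cantor_space: "a \<in> cantor_space \<Longrightarrow> b \<in> {0, 1} \<Longrightarrow> case_nat b a \<in> cantor_space"
  by (auto simp: cantor_space_def split: nat.split)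

lemma continuous_on_case_nat: "continuous_on S (case_nat (b::real))"
proof (rule continuous_on_coordinatewise_then_product)
  fix i
  show "continuous_on S (\<lambda>a. case_nat b a i)"
    by (cases i) (simp_all add: continuous_on_subset[OF continuous_on_product_coordinates])
qed

lemma funpow_case_nat: "((case_nat b ^^ n) a) i = (if i < n then b else a (i - n))"
  by (induction n arbitrary: i) (auto split: nat.split)

lemma funpow_case_nat_tendsto: "(\<lambda>n. (case_nat (b::real) ^^ n) a) \<longlonglongrightarrow> (\<lambda>_. b)"
proof -
  have "limitin euclidean (\<lambda>n. (case_nat b ^^ n) a i) b sequentially" for i
  proof -
    have "\<forall>\<^sub>F n in sequentially. (case_nat b ^^ n) a i = b"
      unfolding eventually_sequentially by (intro exI[of _ "Suc i"]) (simp add: funpow_case_nat)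
    then show ?thesis
      by (simp add: tendsto_eventually)
  qed
  then have "limitin (product_topology (\<lambda>i. euclidean) UNIV) (\<lambda>n. (case_nat b ^^ n) a) (\<lambda>_. b) sequentially"
    by (simp add: limitin_componentwise)
  then show ?thesis
    by (simp add: euclidean_product_topology)
qed

lemma case_nat_eq_iff: "case_nat b a = case_nat c d \<longleftrightarrow> b = c \<and> a = d"
  by (metis nat.case fun_eq_iff)

lemma cantor_space_eq_Un_case_nat:
  "cantor_space = case_nat 1 ` cantor_space \<union> case_nat 0 ` cantor_space"
proof
  show "cantor_space \<subseteq> case_nat 1 ` cantor_space \<union> case_nat 0 ` cantor_space"
  proof
    fix a assume a: "a \<in> cantor_space"
    then have tail: "a \<circ> Suc \<in> cantor_space" and "a 0 = 1 \<or> a 0 = 0"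
      by (auto simp: cantor_space_def)
    moreover have "a = case_nat (a 0) (a \<circ> Suc)"
      by (auto simp: fun_eq_iff split: nat.split)
    ultimately show "a \<in> case_nat 1 ` cantor_space \<union> case_nat 0 ` cantor_space"
      by (metis UnI1 UnI2 image_eqI)
  qed
  show "case_nat 1 ` cantor_space \<union> case_nat 0 ` cantor_space \<subseteq> cantor_space"
    by (auto intro: case_nat_in_cantor_space)
qed

lemma homeomorphism_Un_cantor_space:
  fixes X E :: "'a::metric_space set"
  assumes hX: "homeomorphism X cantor_space \<phi>X \<psi>X" and hE: "homeomorphism E cantor_space \<phi>E \<psi>E"
    and "compact X" "compact E" "X \<inter> E = {}"
  defines "g \<equiv> \<lambda>x. if x \<in> X then case_nat 1 (\<phi>X x) else case_nat 0 (\<phi>E x)"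
  obtains g' where "homeomorphism (X \<union> E) cantor_space g g'"
proof -
  have gX: "g x = case_nat 1 (\<phi>X x)" if "x \<in> X" for x
    using that by (simp add: g_def)
  have gE: "g x = case_nat 0 (\<phi>E x)" if "x \<in> E" for x
    using that assms(5) by (auto simp: g_def)
  have "\<exists>g'. homeomorphism (X \<union> E) cantor_space g g'"
  proof (rule homeomorphism_compact)
    show "compact (X \<union> E)"
      using assms(3,4) by (rule compact_Un)
    have "continuous_on (X \<union> E) (\<lambda>x. if x \<in> X then case_nat 1 (\<phi>X x) else case_nat 0 (\<phi>E x))"
    proof (rule continuous_on_If)
      show "continuous_on X (\<lambda>x. case_nat 1 (\<phi>X x))"
        using hX continuous_on_compose[of X \<phi>X "case_nat 1"] continuous_on_case_nat
        by (auto simp: homeomorphism_def o_def)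
      show "continuous_on E (\<lambda>x. case_nat 0 (\<phi>E x))"
        using hE continuous_on_compose[of E \<phi>E "case_nat 0"] continuous_on_case_nat
        by (auto simp: homeomorphism_def o_def)
    qed (use assms(3-5) compact_imp_closed in auto)
    then show "continuous_on (X \<union> E) g"
      by (simp add: g_def)
    have "g ` X = case_nat 1 ` \<phi>X ` X" "g ` E = case_nat 0 ` \<phi>E ` E"
      unfolding image_image using gX gE by (auto intro: image_cong)
    then show "g ` (X \<union> E) = cantor_space"
      using hX hE cantor_space_eq_Un_case_nat by (simp add: image_Un homeomorphism_def)
    have "inj_on \<phi>X X" "inj_on \<phi>E E"
      using hX hE by (metis homeomorphism_def inj_on_inverseI)+
    then show "inj_on g (X \<union> E)"
      using assms(5) unfolding inj_on_def g_def by (auto simp: case_nat_eq_iff)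
  qed
  with that show ?thesis
    by blast
qed

lemma funpow_semiconj:
  assumes "\<And>x. x \<in> S \<Longrightarrow> f x \<in> S \<and> g (f x) = \<phi> (g x)" "x \<in> S"
  shows "(f ^^ n) x \<in> S \<and> g ((f ^^ n) x) = (\<phi> ^^ n) (g x)"
  by (induction n) (use assms in auto)

locale prepend_one_conjugacy =
  fixes S :: "'a::topological_space set" and g :: "'a \<Rightarrow> nat \<Rightarrow> real" and g' f
  assumes homeo: "homeomorphism S cantor_space g g'"
    and conj: "\<And>x. x \<in> S \<Longrightarrow> f x \<in> S \<and> g (f x) = case_nat 1 (g x)"
begin

definition attractor :: 'a where
  "attractor = g' (\<lambda>_. 1)"

lemma ones_in_cantor_space: "(\<lambda>_. 1) \<in> cantor_space"
  by (simp add: cantor_space_def)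

lemma g'_g: "x \<in> S \<Longrightarrow> g' (g x) = x"
  and g_in_cantor_space: "x \<in> S \<Longrightarrow> g x \<in> cantor_space"
  and g_g': "a \<in> cantor_space \<Longrightarrow> g (g' a) = a \<and> g' a \<in> S"
  using homeo by (auto simp: homeomorphism_def)

lemma attractor_in: "attractor \<in> S"
  using g_g' ones_in_cantor_space by (simp add: attractor_def)

lemma g_attractor: "g attractor = (\<lambda>_. 1)"
  using g_g' ones_in_cantor_space by (simp add: attractor_def)

lemma eq_attractor_iff: "x \<in> S \<Longrightarrow> x = attractor \<longleftrightarrow> g x = (\<lambda>_. 1)"
  using g'_g g_attractor by (metis attractor_def)

lemma f_attractor: "f attractor = attractor"
proof -
  have "case_nat 1 (\<lambda>_. 1) = (\<lambda>_::nat. 1::real)"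
    by (simp add: fun_eq_iff split: nat.split)
  then show ?thesis
    using conj[OF attractor_in] eq_attractor_iff g_attractor by simp
qed

lemma funpow_tendsto_attractor:
  assumes "x \<in> S"
  shows "(\<lambda>n. (f ^^ n) x) \<longlonglongrightarrow> attractor"
proof -
  note iter = funpow_semiconj[of S f g "case_nat 1", OF conj assms]
  have "(\<lambda>n. g' ((case_nat 1 ^^ n) (g x))) \<longlonglongrightarrow> g' (\<lambda>_. 1)"
  proof (rule continuous_on_tendsto_compose[OF _ funpow_case_nat_tendsto ones_in_cantor_space])
    show "continuous_on cantor_space g'"
      using homeo by (simp add: homeomorphism_def)
    have "(case_nat 1 ^^ n) (g x) \<in> cantor_space" for n
      using iter[of n] g_in_cantor_space[of "(f ^^ n) x"] by simp
    then show "\<forall>\<^sub>F n in sequentially. (case_nat 1 ^^ n) (g x) \<in> cantor_space"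
      by simp
  qed
  moreover have "(f ^^ n) x = g' ((case_nat 1 ^^ n) (g x))" for n
    using iter[of n] g'_g[of "(f ^^ n) x"] by simp
  ultimately show ?thesis
    by (simp add: attractor_def)
qed

lemma mem_all_funpow_images:
  assumes x: "\<And>n. x \<in> (f ^^ n) ` S"
  shows "x = attractor"
proof -
  have "g x i = 1" for i
  proof -
    obtain y where "y \<in> S" "x = (f ^^ Suc i) y"
      using x by blast
    then have "g x = (case_nat 1 ^^ Suc i) (g y)"
      using funpow_semiconj[of S f g "case_nat 1", OF conj, of y "Suc i"]
      by (auto simp del: funpow.simps)
    then show ?thesis
      by (simp add: funpow_case_nat del: funpow.simps)
  qed
  moreover have "x \<in> S"
    using x[of 0] by simp
  ultimately show ?thesis
    using eq_attractor_iff by (simp add: fun_eq_iff)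
qed

end

text \<open>Coding \<open>X \<union> E\<close> by sequences whose first digit records the piece, and \<open>X\<close> by plain
  sequences, the map \<open>X \<union> E \<rightarrow> X\<close> becomes prepending the digit 1.\<close>
lemma cantor_set_Un_absorbing_homeomorphism:
  fixes X E :: "'a::metric_space set"
  assumes "cantor_set X" "cantor_set E" "X \<inter> E = {}"
  obtains f f' p where "homeomorphism (X \<union> E) X f f'" "p \<in> X" "f p = p"
    "\<And>x. x \<in> X \<union> E \<Longrightarrow> (\<lambda>n. (f ^^ n) x) \<longlonglongrightarrow> p"
    "\<And>x. (\<And>n. x \<in> (f ^^ n) ` (X \<union> E)) \<Longrightarrow> x = p"
proof -
  obtain \<phi>X \<psi>X where hX: "homeomorphism X cantor_space \<phi>X \<psi>X"
    using assms(1) by (rule cantor_set_homeomorphic_cantor_space)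
  obtain \<phi>E \<psi>E where hE: "homeomorphism E cantor_space \<phi>E \<psi>E"
    using assms(2) by (rule cantor_set_homeomorphic_cantor_space)
  define g where "g x = (if x \<in> X then case_nat 1 (\<phi>X x) else case_nat 0 (\<phi>E x))" for x
  have "compact X" "compact E"
    using assms(1,2) by (simp_all add: cantor_set_def)
  then obtain g' where hg: "homeomorphism (X \<union> E) cantor_space g g'"
    unfolding g_def by (rule homeomorphism_Un_cantor_space[OF hX hE _ _ assms(3)])
  define f where "f = \<psi>X \<circ> g"
  have hf: "homeomorphism (X \<union> E) X f (g' \<circ> \<phi>X)"
    unfolding f_def using hg homeomorphism_symD[OF hX] by (rule homeomorphism_compose)
  have "f x \<in> X \<union> E \<and> g (f x) = case_nat 1 (g x)" if "x \<in> X \<union> E" for x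
  proof -
    have "g x \<in> cantor_space"
      using hg that by (auto simp: homeomorphism_def)
    then have "f x \<in> X" "\<phi>X (f x) = g x"
      using hX by (auto simp: f_def homeomorphism_def)
    then show ?thesis
      by (simp add: g_def)
  qed
  with hg interpret prepend_one_conjugacy "X \<union> E" g g' f
    by unfold_locales
  show ?thesis
  proof (rule that[OF hf _ f_attractor funpow_tendsto_attractor mem_all_funpow_images])
    have "g attractor 0 \<noteq> 0"
      by (simp add: g_attractor)
    then show "attractor \<in> X"
      by (cases "attractor \<in> X") (simp_all add: g_def)
  qed
qed

lemma cantor_set_contracting_homeomorphism:
  fixes A B :: "'a::metric_space set"
  assumes "cantor_set A" "cantor_set (B - A)" "A \<subseteq> B"
  obtains h h' p where "homeomorphism B A h h'" "p \<in> A" "h p = p"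
    "\<And>x. x \<in> B \<Longrightarrow> (\<lambda>n. (h ^^ n) x) \<longlonglongrightarrow> p"
proof -
  have B: "A \<union> (B - A) = B"
    using assms(3) by blast
  obtain f f' p where "homeomorphism B A f f'" "p \<in> A" "f p = p"
    "\<And>x. x \<in> B \<Longrightarrow> (\<lambda>n. (f ^^ n) x) \<longlonglongrightarrow> p"
    by (rule cantor_set_Un_absorbing_homeomorphism[OF assms(1,2) Diff_disjoint, unfolded B]) blast
  then show ?thesis
    by (rule that)
qed

lemma cantor_set_expanding_homeomorphism:
  fixes A B :: "'a::metric_space set"
  assumes "cantor_set B" "cantor_set (A - B)" "B \<subseteq> A"
  obtains h h' p where "homeomorphism B A h h'" "p \<in> B" "h p = p"
    "\<And>x. (\<And>n. (h ^^ n) x \<in> B) \<Longrightarrow> x = p"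
proof -
  have A: "B \<union> (A - B) = A"
    using assms(3) by blast
  obtain f f' p where hf: "homeomorphism A B f f'" and p: "p \<in> B" "f p = p"
    and trap: "\<And>x. (\<And>n. x \<in> (f ^^ n) ` A) \<Longrightarrow> x = p"
    by (rule cantor_set_Un_absorbing_homeomorphism[OF assms(1,2) Diff_disjoint, unfolded A]) blast
  have ff': "\<And>y. y \<in> B \<Longrightarrow> f (f' y) = y \<and> f' y \<in> A" and f'f: "\<And>x. x \<in> A \<Longrightarrow> f' (f x) = x"
    using hf by (auto simp: homeomorphism_def)
  show ?thesis
  proof (rule that[OF homeomorphism_symD[OF hf] p(1)])
    show "f' p = p"
      using f'f[of p] p assms(3) by auto
    fix x assume orbit: "\<And>n. (f' ^^ n) x \<in> B"
    have "x = (f ^^ n) ((f' ^^ n) x)" for n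
    proof (induction n)
      case (Suc n)
      have "(f ^^ Suc n) ((f' ^^ Suc n) x) = (f ^^ n) (f (f' ((f' ^^ n) x)))"
        by (simp add: funpow_swap1)
      then show ?case
        using Suc ff'[OF orbit[of n]] by simp
    qed simp
    then show "x = p"
      using orbit assms(3) by (intro trap) blast
  qed
qed

lemma cantor_set_nested_clopen_homeomorphism:
  fixes K :: "'a::metric_space set"
  assumes "cantor_set K" "clopen_in K A" "clopen_in K B" "A \<noteq> {}" "B \<noteq> {}" "A \<subseteq> B \<or> B \<subseteq> A"
  obtains h h' where "homeomorphism B A h h'"
    "\<And>x. A \<subseteq> B \<Longrightarrow> x \<in> A \<Longrightarrow> \<exists>p\<in>A. h p = p \<and> (\<lambda>n. (h ^^ n) x) \<longlonglongrightarrow> p"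
    "\<not> A \<subseteq> B \<Longrightarrow> \<exists>p\<in>B. h p = p \<and> (\<forall>x. (\<forall>n. (h ^^ n) x \<in> B) \<longrightarrow> x = p)"
proof -
  have cantor: "cantor_set V" if "clopen_in K V" "V \<noteq> {}" for V
    using cantor_set_clopen_in[OF assms(1) that] .
  consider "A = B" | "A \<subset> B" | "B \<subset> A"
    using assms(6) by blast
  then show ?thesis
  proof cases
    case 1
    show ?thesis
    proof (rule that[of id id])
      show "homeomorphism B A id id"
        using 1 homeomorphism_ident[of A] by (simp add: id_def)
    qed (use 1 in auto)
  next
    case 2
    have "cantor_set A" "cantor_set (B - A)"
      using 2 assms(2-4) cantor clopen_in_Diff by blast+
    then obtain h h' p where h: "homeomorphism B A h h'" "p \<in> A" "h p = p"
      "\<And>x. x \<in> B \<Longrightarrow> (\<lambda>n. (h ^^ n) x) \<longlonglongrightarrow> p"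
      using 2 by (rule cantor_set_contracting_homeomorphism[OF _ _ psubset_imp_subset]) blast
    show ?thesis
    proof (rule that[OF h(1)])
      show "\<exists>p\<in>A. h p = p \<and> (\<lambda>n. (h ^^ n) x) \<longlonglongrightarrow> p" if "x \<in> A" for x
        using h(2-4) that 2 by blast
    qed (use 2 in blast)
  next
    case 3
    have "cantor_set B" "cantor_set (A - B)"
      using 3 assms(2,3,5) cantor clopen_in_Diff by blast+
    then obtain h h' p where h: "homeomorphism B A h h'" "p \<in> B" "h p = p"
      "\<And>x. (\<And>n. (h ^^ n) x \<in> B) \<Longrightarrow> x = p"
      using 3 by (rule cantor_set_expanding_homeomorphism[OF _ _ psubset_imp_subset]) blast
    show ?thesis
    proof (rule that[OF h(1)])
      show "\<exists>p\<in>B. h p = p \<and> (\<forall>x. (\<forall>n. (h ^^ n) x \<in> B) \<longrightarrow> x = p)"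
        using h(2-4) by blast
    qed (use 3 in blast)
  qed
qed

section \<open>Pasting homeomorphisms along two partitions\<close>

definition paste :: "'i set \<Rightarrow> ('i \<Rightarrow> 'a set) \<Rightarrow> ('i \<Rightarrow> 'a \<Rightarrow> 'b) \<Rightarrow> 'a \<Rightarrow> 'b" where
  "paste I B h x = h (THE j. j \<in> I \<and> x \<in> B j) x"

lemma paste_eq:
  assumes "\<And>i j. i \<in> I \<Longrightarrow> j \<in> I \<Longrightarrow> i \<noteq> j \<Longrightarrow> B i \<inter> B j = {}" "j \<in> I" "x \<in> B j"
  shows "paste I B h x = h j x"
proof -
  have "(THE j. j \<in> I \<and> x \<in> B j) = j"
    using assms by blast
  then show ?thesis
    by (simp add: paste_def)
qed

lemma homeomorphism_paste:
  fixes K :: "'a::t2_space set"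
  assumes "compact K" "finite I" "K = (\<Union>j\<in>I. B j)" "K = (\<Union>j\<in>I. A j)"
    and "\<And>j. j \<in> I \<Longrightarrow> closed (B j)"
    and "\<And>i j. i \<in> I \<Longrightarrow> j \<in> I \<Longrightarrow> i \<noteq> j \<Longrightarrow> A i \<inter> A j = {}"
    and B_disjoint: "\<And>i j. i \<in> I \<Longrightarrow> j \<in> I \<Longrightarrow> i \<noteq> j \<Longrightarrow> B i \<inter> B j = {}"
    and h: "\<And>j. j \<in> I \<Longrightarrow> homeomorphism (B j) (A j) (h j) (h' j)"
  shows "\<exists>S. homeomorphism K K (paste I B h) S"
proof (rule homeomorphism_compact[OF assms(1)])
  have T: "paste I B h x = h j x" if "j \<in> I" "x \<in> B j" for j x
    using B_disjoint that by (rule paste_eq)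
  have hB: "h j x \<in> A j \<and> h' j (h j x) = x" if "j \<in> I" "x \<in> B j" for j x
    using h[OF that(1)] that(2) by (auto simp: homeomorphism_def)
  have hA: "h' j y \<in> B j \<and> h j (h' j y) = y" if "j \<in> I" "y \<in> A j" for j y
    using h[OF that(1)] that(2) by (auto simp: homeomorphism_def)
  have "continuous_on (B j) (paste I B h)" if "j \<in> I" for j
    using h[OF that] T[OF that] by (auto simp: homeomorphism_def intro: continuous_on_eq)
  then show "continuous_on K (paste I B h)"
    unfolding assms(3) using assms(2,5) by (intro continuous_on_closed_Union)
  show "paste I B h ` K = K"
  proof
    show "paste I B h ` K \<subseteq> K"
      using assms(3,4) T hB by fastforce
    show "K \<subseteq> paste I B h ` K"
    proof
      fix y assume "y \<in> K"
      then obtain j where "j \<in> I" "y \<in> A j"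
        using assms(4) by blast
      then show "y \<in> paste I B h ` K"
        using hA T assms(3) by (metis UN_I image_eqI)
    qed
  qed
  show "inj_on (paste I B h) K"
  proof
    fix x y assume "x \<in> K" "y \<in> K" "paste I B h x = paste I B h y"
    moreover obtain i j where ij: "i \<in> I" "x \<in> B i" "j \<in> I" "y \<in> B j"
      using assms(3) \<open>x \<in> K\<close> \<open>y \<in> K\<close> by blast
    ultimately have "h i x = h j y"
      using T by metis
    then have "i = j"
      using hB assms(6) ij by (metis disjoint_iff)
    with \<open>h i x = h j y\<close> show "x = y"
      using ij hB by metis
  qed
qed

lemma funpow_eq_on_orbit:
  assumes "\<And>k. (f ^^ k) x \<in> S" "\<And>y. y \<in> S \<Longrightarrow> f y = g y"
  shows "(f ^^ n) x = (g ^^ n) x"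
proof (induction n)
  case (Suc n)
  then show ?case
    using assms(1)[of n] assms(2) by simp
qed simp

lemma orbit_stays_in_piece:
  assumes "K = (\<Union>j\<in>I. B j)" "K = (\<Union>j\<in>I. A j)"
    and disjoint: "\<And>i j. i \<in> I \<Longrightarrow> j \<in> I \<Longrightarrow> i \<noteq> j \<Longrightarrow> A i \<inter> A j = {}"
    and maps: "\<And>j x. j \<in> I \<Longrightarrow> x \<in> B j \<Longrightarrow> T x \<in> A j"
    and nested: "\<And>j. j \<in> I \<Longrightarrow> A j \<subseteq> B j \<or> B j \<subseteq> A j"
    and never: "\<And>n l. l \<in> I \<Longrightarrow> (T ^^ n) x \<in> A l \<Longrightarrow> \<not> A l \<subseteq> B l"
    and j: "j \<in> I" "x \<in> A j"
  shows "(T ^^ n) x \<in> A j \<and> (T ^^ n) x \<in> B j"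
proof -
  have step: "(T ^^ n) x \<in> B j \<and> (T ^^ Suc n) x \<in> A j" if "(T ^^ n) x \<in> A j" for n
  proof -
    have "(T ^^ n) x \<in> K"
      using that j(1) assms(2) by blast
    then obtain l where l: "l \<in> I" "(T ^^ n) x \<in> B l"
      using assms(1) by blast
    then have "(T ^^ Suc n) x \<in> A l"
      using maps by simp
    then have "B l \<subseteq> A l"
      using never nested l(1) by blast
    then have "l = j"
      using disjoint[OF l(1) j(1)] l(2) that by blast
    with l \<open>(T ^^ Suc n) x \<in> A l\<close> show ?thesis
      by simp
  qed
  have "(T ^^ n) x \<in> A j" for n
  proof (induction n)
    case 0
    then show ?case using j by simp
  next
    case (Suc n)
    then show ?case using step by blast
  qed
  with step show ?thesis
    by blast
qed

lemma orbit_tendsto_fixed_point: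
  assumes "K = (\<Union>j\<in>I. B j)" "K = (\<Union>j\<in>I. A j)"
    and disjoint: "\<And>i j. i \<in> I \<Longrightarrow> j \<in> I \<Longrightarrow> i \<noteq> j \<Longrightarrow> A i \<inter> A j = {}"
    and maps: "\<And>j x. j \<in> I \<Longrightarrow> x \<in> B j \<Longrightarrow> T x \<in> A j"
    and nested: "\<And>j. j \<in> I \<Longrightarrow> A j \<subseteq> B j \<or> B j \<subseteq> A j"
    and attracting: "\<And>j x. j \<in> I \<Longrightarrow> A j \<subseteq> B j \<Longrightarrow> x \<in> A j \<Longrightarrow>
      \<exists>p\<in>K. T p = p \<and> (\<lambda>n. (T ^^ n) x) \<longlonglongrightarrow> p"
    and trapping: "\<And>j x. j \<in> I \<Longrightarrow> \<not> A j \<subseteq> B j \<Longrightarrow> (\<And>n. (T ^^ n) x \<in> B j) \<Longrightarrow> T x = x"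
    and "x \<in> K"
  shows "\<exists>p\<in>K. T p = p \<and> (\<lambda>n. (T ^^ n) x) \<longlonglongrightarrow> p"
proof (cases "\<exists>n. \<exists>j\<in>I. A j \<subseteq> B j \<and> (T ^^ n) x \<in> A j")
  case True
  then obtain n j where "j \<in> I" "A j \<subseteq> B j" "(T ^^ n) x \<in> A j"
    by blast
  then obtain p where p: "p \<in> K" "T p = p" "(\<lambda>k. (T ^^ k) ((T ^^ n) x)) \<longlonglongrightarrow> p"
    using attracting by blast
  then have "(\<lambda>k. (T ^^ (k + n)) x) \<longlonglongrightarrow> p"
    by (simp add: funpow_add)
  then have "(\<lambda>k. (T ^^ k) x) \<longlonglongrightarrow> p"
    by (rule LIMSEQ_offset)
  with p(1,2) show ?thesis
    by blast
next
  case False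
  then have never: "\<not> A l \<subseteq> B l" if "l \<in> I" "(T ^^ n) x \<in> A l" for n l
    using that by meson
  obtain j where j: "j \<in> I" "x \<in> A j"
    using assms(2,8) by blast
  note stays = orbit_stays_in_piece[OF assms(1,2) disjoint maps nested never j]
  have "T x = x"
    using trapping[OF j(1)] never[of j 0] stays j by simp
  then have "(T ^^ n) x = x" for n
    by (induction n) simp_all
  then have "(\<lambda>n. (T ^^ n) x) \<longlonglongrightarrow> x"
    by simp
  with \<open>T x = x\<close> \<open>x \<in> K\<close> show ?thesis
    by blast
qed

locale nested_partitions =
  fixes K :: "'a::metric_space set" and I :: "'i set" and A B :: "'i \<Rightarrow> 'a set"
  assumes cantor: "cantor_set K" and finite: "finite I"
    and A_cover: "K = (\<Union>j\<in>I. A j)" and A_closed: "\<And>j. j \<in> I \<Longrightarrow> closed (A j)"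
    and A_nonempty: "\<And>j. j \<in> I \<Longrightarrow> A j \<noteq> {}"
    and A_disjoint: "\<And>i j. i \<in> I \<Longrightarrow> j \<in> I \<Longrightarrow> i \<noteq> j \<Longrightarrow> A i \<inter> A j = {}"
    and B_cover: "K = (\<Union>j\<in>I. B j)" and B_closed: "\<And>j. j \<in> I \<Longrightarrow> closed (B j)"
    and B_nonempty: "\<And>j. j \<in> I \<Longrightarrow> B j \<noteq> {}"
    and B_disjoint: "\<And>i j. i \<in> I \<Longrightarrow> j \<in> I \<Longrightarrow> i \<noteq> j \<Longrightarrow> B i \<inter> B j = {}"
    and nested: "\<And>j. j \<in> I \<Longrightarrow> A j \<subseteq> B j \<or> B j \<subseteq> A j"
begin

lemma piece_homeomorphisms:
  obtains h h' where "\<And>j. j \<in> I \<Longrightarrow> homeomorphism (B j) (A j) (h j) (h' j)"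
    "\<And>j x. j \<in> I \<Longrightarrow> A j \<subseteq> B j \<Longrightarrow> x \<in> A j \<Longrightarrow>
      \<exists>p\<in>A j. h j p = p \<and> (\<lambda>n. (h j ^^ n) x) \<longlonglongrightarrow> p"
    "\<And>j. j \<in> I \<Longrightarrow> \<not> A j \<subseteq> B j \<Longrightarrow>
      \<exists>p\<in>B j. h j p = p \<and> (\<forall>x. (\<forall>n. (h j ^^ n) x \<in> B j) \<longrightarrow> x = p)"
proof -
  define good where "good j h h' \<longleftrightarrow> homeomorphism (B j) (A j) h h' \<and>
      (\<forall>x. A j \<subseteq> B j \<longrightarrow> x \<in> A j \<longrightarrow> (\<exists>p\<in>A j. h p = p \<and> (\<lambda>n. (h ^^ n) x) \<longlonglongrightarrow> p)) \<and>
      (\<not> A j \<subseteq> B j \<longrightarrow> (\<exists>p\<in>B j. h p = p \<and> (\<forall>x. (\<forall>n. (h ^^ n) x \<in> B j) \<longrightarrow> x = p)))"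
    for j and h h' :: "'a \<Rightarrow> 'a"
  have "\<exists>h h'. good j h h'" if "j \<in> I" for j
  proof -
    have "clopen_in K (A j)" "clopen_in K (B j)"
      by (rule clopen_in_partition[of I K _ j]; use finite A_cover A_closed A_disjoint B_cover B_closed B_disjoint that in simp)+
    from cantor_set_nested_clopen_homeomorphism[OF cantor this A_nonempty[OF that] B_nonempty[OF that]
        nested[OF that]]
    obtain h h' where "homeomorphism (B j) (A j) h h'"
      "\<And>x. A j \<subseteq> B j \<Longrightarrow> x \<in> A j \<Longrightarrow> \<exists>p\<in>A j. h p = p \<and> (\<lambda>n. (h ^^ n) x) \<longlonglongrightarrow> p"
      "\<not> A j \<subseteq> B j \<Longrightarrow> \<exists>p\<in>B j. h p = p \<and> (\<forall>x. (\<forall>n. (h ^^ n) x \<in> B j) \<longrightarrow> x = p)"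
      by blast
    then have "good j h h'"
      unfolding good_def by blast
    then show ?thesis
      by blast
  qed
  then obtain h where "\<forall>j\<in>I. \<exists>h'. good j (h j) h'"
    using bchoice[of I "\<lambda>j h. \<exists>h'. good j h h'"] by blast
  then obtain h' where good: "\<And>j. j \<in> I \<Longrightarrow> good j (h j) (h' j)"
    using bchoice[of I "\<lambda>j h'. good j (h j) h'"] by blast
  show ?thesis
    by (rule that[of h h']) (use good in \<open>simp_all add: good_def\<close>)
qed

theorem homeomorphism_with_convergent_orbits:
  obtains T where "\<exists>S. homeomorphism K K T S" "\<And>j x. j \<in> I \<Longrightarrow> x \<in> B j \<Longrightarrow> T x \<in> A j"
    "\<And>x. x \<in> K \<Longrightarrow> \<exists>p\<in>K. T p = p \<and> (\<lambda>n. (T ^^ n) x) \<longlonglongrightarrow> p"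
proof -
  obtain h h' where hom: "\<And>j. j \<in> I \<Longrightarrow> homeomorphism (B j) (A j) (h j) (h' j)"
    and attracting: "\<And>j x. j \<in> I \<Longrightarrow> A j \<subseteq> B j \<Longrightarrow> x \<in> A j \<Longrightarrow>
      \<exists>p\<in>A j. h j p = p \<and> (\<lambda>n. (h j ^^ n) x) \<longlonglongrightarrow> p"
    and trapping: "\<And>j. j \<in> I \<Longrightarrow> \<not> A j \<subseteq> B j \<Longrightarrow>
      \<exists>p\<in>B j. h j p = p \<and> (\<forall>x. (\<forall>n. (h j ^^ n) x \<in> B j) \<longrightarrow> x = p)"
    by (rule piece_homeomorphisms) blast
  define T where "T = paste I B h"
  have T_eq: "T x = h j x" if "j \<in> I" "x \<in> B j" for j x
    unfolding T_def using B_disjoint that by (rule paste_eq)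
  have "compact K"
    using cantor by (simp add: cantor_set_def)
  then have T_homeo: "\<exists>S. homeomorphism K K T S"
    unfolding T_def using finite B_cover A_cover B_closed A_disjoint B_disjoint hom
    by (rule homeomorphism_paste)
  have maps: "T x \<in> A j" if "j \<in> I" "x \<in> B j" for j x
    using hom[OF that(1)] T_eq[OF that] that(2) by (auto simp: homeomorphism_def)
  show ?thesis
  proof (rule that[OF T_homeo maps])
    fix x assume "x \<in> K"
    show "\<exists>p\<in>K. T p = p \<and> (\<lambda>n. (T ^^ n) x) \<longlonglongrightarrow> p"
    proof (rule orbit_tendsto_fixed_point[OF B_cover A_cover A_disjoint maps nested _ _ \<open>x \<in> K\<close>])
      fix j x assume j: "j \<in> I" "A j \<subseteq> B j" "x \<in> A j"
      then obtain p where p: "p \<in> A j" "h j p = p" "(\<lambda>n. (h j ^^ n) x) \<longlonglongrightarrow> p"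
        using attracting by blast
      have "(T ^^ n) x \<in> A j" for n
        by (induction n) (use j maps in auto)
      then have "(T ^^ n) x = (h j ^^ n) x" for n
        using j(2) T_eq[OF j(1)] funpow_eq_on_orbit[of T x "B j" "h j"] by blast
      moreover have "p \<in> K" "T p = p"
        using p(1,2) j A_cover T_eq by auto
      ultimately show "\<exists>p\<in>K. T p = p \<and> (\<lambda>n. (T ^^ n) x) \<longlonglongrightarrow> p"
        using p(3) by auto
    next
      fix j x assume j: "j \<in> I" "\<not> A j \<subseteq> B j" and orbit: "\<And>n. (T ^^ n) x \<in> B j"
      then obtain p where p: "p \<in> B j" "h j p = p" "\<And>x. (\<And>n. (h j ^^ n) x \<in> B j) \<Longrightarrow> x = p"
        using trapping by blast
      have "(T ^^ n) x = (h j ^^ n) x" for n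
        using orbit T_eq[OF j(1)] by (rule funpow_eq_on_orbit)
      then have "x = p"
        using orbit p(3) by metis
      then show "T x = x"
        using T_eq[OF j(1) p(1)] p(2) by simp
    qed
  qed
qed

end

lemma homeomorphism_preimage_partition:
  assumes hT: "homeomorphism K K T S" and "closed K" "K = (\<Union>j\<in>I. A j)"
    and "\<And>j. j \<in> I \<Longrightarrow> closed (A j)" "\<And>j. j \<in> I \<Longrightarrow> A j \<noteq> {}"
    and "\<And>i j. i \<in> I \<Longrightarrow> j \<in> I \<Longrightarrow> i \<noteq> j \<Longrightarrow> A i \<inter> A j = {}"
  shows "K = (\<Union>j\<in>I. {x \<in> K. T x \<in> A j})"
    and "\<And>j. j \<in> I \<Longrightarrow> closed {x \<in> K. T x \<in> A j}"
    and "\<And>j. j \<in> I \<Longrightarrow> {x \<in> K. T x \<in> A j} \<noteq> {}"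
    and "\<And>i j. i \<in> I \<Longrightarrow> j \<in> I \<Longrightarrow> i \<noteq> j \<Longrightarrow>
      {x \<in> K. T x \<in> A i} \<inter> {x \<in> K. T x \<in> A j} = {}"
proof -
  have "T x \<in> K" if "x \<in> K" for x
    using hT that by (auto simp: homeomorphism_def)
  then show "K = (\<Union>j\<in>I. {x \<in> K. T x \<in> A j})"
    using assms(3) by auto
  show "closed {x \<in> K. T x \<in> A j}" if j: "j \<in> I" for j
  proof -
    have "{x \<in> K. T x \<in> A j} = K \<inter> T -` A j"
      by auto
    moreover have "continuous_on K T"
      using hT by (simp add: homeomorphism_def)
    ultimately show ?thesis
      using continuous_closed_preimage assms(2,4) j by metis
  qed
  show "{x \<in> K. T x \<in> A j} \<noteq> {}" if j: "j \<in> I" for j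
  proof -
    obtain y where y: "y \<in> A j"
      using assms(5)[OF j] by blast
    then have "y \<in> K"
      using assms(3) j by blast
    then have "S y \<in> K" "T (S y) = y"
      using hT by (auto simp: homeomorphism_def)
    with y show ?thesis
      by auto
  qed
  show "{x \<in> K. T x \<in> A i} \<inter> {x \<in> K. T x \<in> A j} = {}" if "i \<in> I" "j \<in> I" "i \<noteq> j" for i j
    using assms(6)[OF that] by auto
qed

lemma preimage_subset_if_inv_into_closed:
  assumes "inj_on T K" "\<forall>y\<in>A. inv_into K T y \<in> A"
  shows "{x \<in> K. T x \<in> A} \<subseteq> A"
proof
  fix x assume "x \<in> {x \<in> K. T x \<in> A}"
  then have "x \<in> K" "T x \<in> A"
    by auto
  then show "x \<in> A"
    using assms inv_into_f_f[OF assms(1) \<open>x \<in> K\<close>] by metis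
qed

lemma nested_partitions_preimage:
  fixes K :: "'a::metric_space set"
  assumes "cantor_set K" "finite I" and hT: "homeomorphism K K T S" and "K = (\<Union>j\<in>I. A j)"
    and "\<And>j. j \<in> I \<Longrightarrow> cantor_set (A j)"
    and "\<And>i j. i \<in> I \<Longrightarrow> j \<in> I \<Longrightarrow> i \<noteq> j \<Longrightarrow> A i \<inter> A j = {}"
    and "\<And>j. j \<in> I \<Longrightarrow> (\<forall>y\<in>A j. inv_into K T y \<in> A j) \<or> (\<forall>x\<in>A j. T x \<in> A j)"
  shows "nested_partitions K I A (\<lambda>j. {x \<in> K. T x \<in> A j})"
proof -
  have A: "closed (A j)" "A j \<noteq> {}" if "j \<in> I" for j
    using assms(5)[OF that] by (simp_all add: cantor_set_closed cantor_set_def)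
  note B = homeomorphism_preimage_partition[OF hT cantor_set_closed[OF assms(1)] assms(4) A(1) A(2) assms(6)]
  have "inj_on T K"
    using hT by (auto simp: homeomorphism_def intro: inj_on_inverseI)
  then have nested: "A j \<subseteq> {x \<in> K. T x \<in> A j} \<or> {x \<in> K. T x \<in> A j} \<subseteq> A j" if "j \<in> I" for j
    using assms(4,7) that preimage_subset_if_inv_into_closed[of T K "A j"] by auto
  show ?thesis
  proof (rule nested_partitions.intro)
    show "cantor_set K" "finite I" "K = (\<Union>j\<in>I. A j)"
      by (fact assms(1,2,4))+
    show "K = (\<Union>j\<in>I. {x \<in> K. T x \<in> A j})"
      by (rule B(1))
    fix i j assume "i \<in> I" "j \<in> I"
    show "closed (A j)" "A j \<noteq> {}" "closed {x \<in> K. T x \<in> A j}" "{x \<in> K. T x \<in> A j} \<noteq> {}"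
      "A j \<subseteq> {x \<in> K. T x \<in> A j} \<or> {x \<in> K. T x \<in> A j} \<subseteq> A j"
      using A B(2,3) nested \<open>j \<in> I\<close> by blast+
    assume "i \<noteq> j"
    then show "A i \<inter> A j = {}" "{x \<in> K. T x \<in> A i} \<inter> {x \<in> K. T x \<in> A j} = {}"
      using assms(6) B(4) \<open>i \<in> I\<close> \<open>j \<in> I\<close> by blast+
  qed
qed

theorem lemma4p1:
  fixes K :: "'a::metric_space set" and T :: "'a \<Rightarrow> 'a"
    and Ks :: "nat \<Rightarrow> 'a set" and N :: nat
  assumes "cantor_set K"
    and "\<exists>S. homeomorphism K K T S"
    and "\<And>i. i \<in> {1..N} \<Longrightarrow> cantor_set (Ks i)"
    and "\<And>i j. i \<in> {1..N} \<Longrightarrow> j \<in> {1..N} \<Longrightarrow> i \<noteq> j \<Longrightarrow> Ks i \<inter> Ks j = {}"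
    and "K = (\<Union>i\<in>{1..N}. Ks i)"
    and "\<And>i. i \<in> {1..N} \<Longrightarrow>
           (\<forall>y\<in>Ks i. inv_into K T y \<in> Ks i) \<or> (\<forall>x\<in>Ks i. T x \<in> Ks i)"
  shows "\<exists>Tt. (\<exists>S. homeomorphism K K Tt S) \<and>
           (\<forall>x\<in>K. \<forall>i\<in>{1..N}. Tt x \<in> Ks i \<longleftrightarrow> T x \<in> Ks i) \<and>
           (\<forall>x\<in>K. \<exists>p\<in>K. Tt p = p \<and> (\<lambda>n. (Tt ^^ n) x) \<longlonglongrightarrow> p)"
proof -
  obtain S where hT: "homeomorphism K K T S"
    using assms(2) by blast
  interpret nested_partitions K "{1..N}" Ks "\<lambda>j. {x \<in> K. T x \<in> Ks j}"
    by (rule nested_partitions_preimage[OF assms(1) finite_atLeastAtMost hT assms(5,3,4,6)])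
  obtain Tt where Tt: "\<exists>S. homeomorphism K K Tt S"
    "\<And>j x. j \<in> {1..N} \<Longrightarrow> x \<in> K \<Longrightarrow> T x \<in> Ks j \<Longrightarrow> Tt x \<in> Ks j"
    "\<And>x. x \<in> K \<Longrightarrow> \<exists>p\<in>K. Tt p = p \<and> (\<lambda>n. (Tt ^^ n) x) \<longlonglongrightarrow> p"
    by (rule homeomorphism_with_convergent_orbits) auto
  have "Tt x \<in> Ks i \<longleftrightarrow> T x \<in> Ks i" if "x \<in> K" "i \<in> {1..N}" for x i
  proof -
    obtain j where "j \<in> {1..N}" "T x \<in> Ks j"
      using B_cover \<open>x \<in> K\<close> by blast
    then show ?thesis
      using Tt(2) assms(4) that by blast
  qed
  with Tt(1,3) show ?thesis
    by blast
qed

end
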